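(* Let Assumptions 1 and 2 hold. For every $\eta>0$, $T\ge1$ and payoff vectors $u_1,\dots,u_T$ with $\|u_t\|_\infty\le u_{\max}$, the regret of FTRL with regularizer $\mathcal R$ satisfies $$R^T_{FTRL}\le\eta\,\varphi_1(0)+\frac{L}{2\eta}T u_{\max}^2,$$ where $\varphi_1(0)=\mathbb{E}[\max_i\epsilon_i]$; and if $\varphi_1(0)>0$ and $\eta=\sqrt{\frac{LTu_{\max}^2}{2\varphi_1(0)}}$, then $R^T_{FTRL}\le u_{\max}\sqrt{2\varphi_1(0)LT}$.
   Context: Let $N\ge 2$, $A=\{1,\dots,N\}$, and $\Delta_N=\{x\in\mathbb{R}^N: x_i\ge 0,\ \sum_i x_i=1\}$. Let $\epsilon=(\epsilon_1,\dots,\epsilon_N)$ be a random vector satisfying Assumption 1: each $\epsilon_i$ is integrable with $\mathbb{E}[\epsilon_i]=0$, and the law of $\epsilon$ is absolutely continuous with respect to Lebesgue measure on $\mathbb{R}^N$ with support all of $\mathbb{R}^N$. For $\eta>0$ the social surplus function is $\varphi_\eta(\theta)=\mathbb{E}[\max_{j\in A}(\theta_j+\eta\epsilon_j)]$, $\theta\in\mathbb{R}^N$; thus $\varphi_\eta(\theta)=\eta\varphi_1(\theta/\eta)$. $\varphi_\eta$ is convex and differentiable with $\nabla\varphi_\eta(\theta)\in\Delta_N$. Assumption 2: $\varphi_1$ is twice continuously differentiable and there is a constant $L>0$ with $2\,\mathrm{tr}(\nabla^2\varphi_1(\theta))\le L$ for all $\theta\in\mathbb{R}^N$. Set $\theta_0=0$,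 $\theta_t=\sum_{s=1}^tu_s$. Regularizer: $\mathcal R(x)=\sup_{\theta\in\mathbb{R}^N}\{\langle\theta,x\rangle-\varphi_\eta(\theta)\}$ for $x\in\Delta_N$. FTRL: $x_1=\arg\max_{x\in\Delta_N}\{-\mathcal R(x)\}$, $x_{t+1}=\arg\max_{x\in\Delta_N}\{\langle\theta_t,x\rangle-\mathcal R(x)\}$. The regret of $x_1,\dots,x_T$ is $R^T=\max_{x\in\Delta_N}\langle\theta_T,x\rangle-\sum_{t=1}^T\langle u_t,x_t\rangle$. *)

theory Defs
  imports "HOL-Probability.Probability"
begin

definition prob_simplex :: "(real ^ 'n::finite) set" where
  "prob_simplex = {x. (\<forall>i. 0 \<le> x $ i) \<and> (\<Sum>i\<in>UNIV. x $ i) = 1}"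

definition phi :: "(real ^ 'n::finite) measure \<Rightarrow> real \<Rightarrow> real ^ 'n \<Rightarrow> real" where
  "phi P \<eta> \<theta> = (\<integral>e. Max (range (\<lambda>j. \<theta> $ j + \<eta> * e $ j)) \<partial>P)"

text \<open>Regularizer: convex conjugate of phi (real valued on the simplex).\<close>
definition reg :: "(real ^ 'n::finite) measure \<Rightarrow> real \<Rightarrow> real ^ 'n \<Rightarrow> real" where
  "reg P \<eta> x = (SUP \<theta>\<in>UNIV. \<theta> \<bullet> x - phi P \<eta> \<theta>)"

definition cumul :: "(nat \<Rightarrow> real ^ 'n::finite) \<Rightarrow> nat \<Rightarrow> real ^ 'n" where
  "cumul u t = (\<Sum>s\<in>{1..t}. u s)"

definition is_ftrl ::
  "(real ^ 'n::finite) measure \<Rightarrow> real \<Rightarrow> (nat \<Rightarrow> real ^ 'n) \<Rightarrow> nat \<Rightarrow> (nat \<Rightarrow> real ^ 'n) \<Rightarrow> bool" where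
  "is_ftrl P \<eta> u T x \<longleftrightarrow>
     (\<forall>t<T. x (t + 1) \<in> prob_simplex \<and>
        (\<forall>y\<in>prob_simplex. cumul u t \<bullet> y - reg P \<eta> y \<le> cumul u t \<bullet> x (t + 1) - reg P \<eta> (x (t + 1))))"

definition regret :: "(nat \<Rightarrow> real ^ 'n::finite) \<Rightarrow> nat \<Rightarrow> (nat \<Rightarrow> real ^ 'n) \<Rightarrow> real" where
  "regret u T x = (SUP y\<in>prob_simplex. cumul u T \<bullet> y) - (\<Sum>t\<in>{1..T}. u t \<bullet> x t)"

end

theory Submission
  imports Defs
begin

(* The surplus phi_eta(theta) = E max_j (theta_j + eta eps_j) is convex, shifts by c when theta is
   shifted by c (1,...,1), and is coordinatewise monotone and submodular. Hence the gradient G of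
   phi_1 lies in the simplex, and its Jacobian H has zero row sums and nonpositive off-diagonal
   entries, so that v' H v <= 2 max_i v_i^2 tr H <= L max_i v_i^2. Since the regularizer is the
   convex conjugate of phi_eta, the FTRL iterate x_{t+1} is a subgradient, hence the gradient, of
   phi_eta at theta_t, and the second-order Taylor bound gives
   phi_eta(theta_{t+1}) <= phi_eta(theta_t) + <u_{t+1}, x_{t+1}> + L umax^2 / (2 eta).
   Telescoping, together with max_x <theta_T, x> <= phi_eta(theta_T) and phi_eta(0) = eta phi_1(0),
   bounds the regret; the second claim is the choice of eta balancing the two terms. *)

lemma has_derivative_directional_quotient:
  fixes f :: "'a::real_normed_vector \<Rightarrow> real"
  assumes "(f has_derivative D) (at x)"
  shows "((\<lambda>t. (f (x + t *\<^sub>R h) - f x) / t) \<longlongrightarrow> D h) (at_right 0)"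
proof -
  have line: "((\<lambda>t. x + t *\<^sub>R h) has_derivative (\<lambda>t. t *\<^sub>R h)) (at (0::real))"
    by (auto intro!: derivative_eq_intros)
  have "bounded_linear D"
    using assms by (rule has_derivative_bounded_linear)
  then have "((\<lambda>t. f (x + t *\<^sub>R h)) has_derivative (\<lambda>t. t * D h)) (at 0)"
    using has_derivative_compose[OF line, of f D] assms
    by (simp add: o_def linear_simps(5))
  then have "((\<lambda>t. f (x + t *\<^sub>R h)) has_field_derivative D h) (at 0)"
    by (simp add: has_field_derivative_def mult_commute_abs)
  then show ?thesis
    by (auto simp: has_field_derivative_iff intro: tendsto_mono[OF at_le[OF subset_UNIV]])
qed

lemma eventually_at_right_0_less_1: "\<forall>\<^sub>F t in at_right (0::real). 0 < t \<and> t < 1"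
  by (auto simp: eventually_at_right_field intro!: exI[of _ 1])

lemma convex_on_has_derivative_le:
  fixes f :: "'a::real_normed_vector \<Rightarrow> real"
  assumes convex: "convex_on UNIV f" and deriv: "(f has_derivative D) (at x)"
  shows "f x + D (y - x) \<le> f y"
proof -
  have "D (y - x) \<le> f y - f x"
  proof (rule tendsto_upperbound[OF has_derivative_directional_quotient[OF deriv]])
    show "\<forall>\<^sub>F t in at_right 0. (f (x + t *\<^sub>R (y - x)) - f x) / t \<le> f y - f x"
      using eventually_at_right_0_less_1
    proof eventually_elim
      case (elim t)
      have "f (x + t *\<^sub>R (y - x)) \<le> (1 - t) * f x + t * f y"
        using elim convex_onD[OF convex, of t x y]
        by (simp add: algebra_simps)
      then have "f (x + t *\<^sub>R (y - x)) - f x \<le> t * (f y - f x)"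
        by (simp add: algebra_simps)
      then show ?case
        using elim by (simp add: divide_le_eq mult.commute)
    qed
  qed simp
  then show ?thesis by simp
qed

lemma subgradient_eq_gradient:
  fixes f :: "'a::real_inner \<Rightarrow> real"
  assumes deriv: "(f has_derivative (\<lambda>h. g \<bullet> h)) (at x)"
    and subgradient: "\<And>y. f x + s \<bullet> (y - x) \<le> f y"
  shows "s = g"
proof -
  have "s \<bullet> h \<le> g \<bullet> h" for h
  proof (rule tendsto_lowerbound[OF has_derivative_directional_quotient[OF deriv]])
    show "\<forall>\<^sub>F t in at_right 0. s \<bullet> h \<le> (f (x + t *\<^sub>R h) - f x) / t"
      using eventually_at_right_0_less_1
    proof eventually_elim
      case (elim t)
      then show ?case
        using subgradient[of "x + t *\<^sub>R h"] by (simp add: le_divide_eq mult.commute)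
    qed
  qed simp
  from this[of "s - g"] have "(s - g) \<bullet> (s - g) \<le> 0"
    by (simp add: inner_diff_left)
  then show ?thesis
    by (metis antisym inner_eq_zero_iff inner_ge_zero right_minus_eq)
qed

lemma real_second_order_upper_bound:
  fixes f f' f'' :: "real \<Rightarrow> real"
  assumes f': "\<And>s. (f has_real_derivative f' s) (at s)"
    and f'': "\<And>s. (f' has_real_derivative f'' s) (at s)"
    and bound: "\<And>s. f'' s \<le> K"
  shows "f 1 \<le> f 0 + f' 0 + K / 2"
proof -
  define g where "g s = f' s - f' 0 - s * K" for s
  have "g s \<le> g 0" if "0 \<le> s" for s
    unfolding g_def[abs_def]
    by (rule DERIV_nonpos_imp_nonincreasing[OF that])
      (auto intro!: derivative_eq_intros f'' simp: bound)
  then have g_nonpos: "g s \<le> 0" if "0 \<le> s" for s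
    using that by (simp add: g_def)
  define k where "k s = f s - f 0 - s * f' 0 - s\<^sup>2 * K / 2" for s
  have "(k has_real_derivative g s) (at s)" for s
    unfolding k_def[abs_def] g_def
    by (auto intro!: derivative_eq_intros f' simp: power2_eq_square algebra_simps)
  then have "k 1 \<le> k 0"
    by (intro DERIV_nonpos_imp_nonincreasing[of 0 1 k]) (auto intro: g_nonpos)
  then show ?thesis
    by (simp add: k_def)
qed

lemma second_order_upper_bound:
  fixes f :: "'a::real_inner \<Rightarrow> real" and g :: "'a \<Rightarrow> 'a"
  assumes grad: "\<And>y. (f has_derivative (\<lambda>h. g y \<bullet> h)) (at y)"
    and hessian: "\<And>y. (g has_derivative H y) (at y)"
    and bound: "\<And>y. H y v \<bullet> v \<le> K"
  shows "f (x + v) \<le> f x + g x \<bullet> v + K / 2"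
proof -
  have line: "((\<lambda>s. x + s *\<^sub>R v) has_derivative (\<lambda>s. s *\<^sub>R v)) (at s)" for s :: real
    by (auto intro!: derivative_eq_intros)
  have df: "((\<lambda>s. f (x + s *\<^sub>R v)) has_real_derivative g (x + s *\<^sub>R v) \<bullet> v) (at s)" for s
    using has_derivative_compose[OF line grad]
    by (simp add: o_def has_field_derivative_def mult_commute_abs)
  have df': "((\<lambda>s. g (x + s *\<^sub>R v) \<bullet> v) has_real_derivative H (x + s *\<^sub>R v) v \<bullet> v) (at s)" for s
  proof -
    have "bounded_linear (H (x + s *\<^sub>R v))"
      using hessian by (rule has_derivative_bounded_linear)
    then have "((\<lambda>s. g (x + s *\<^sub>R v)) has_derivative (\<lambda>t. t *\<^sub>R H (x + s *\<^sub>R v) v)) (at s)"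
      using has_derivative_compose[OF line[of s] hessian] by (simp add: o_def linear_simps(5))
    then show ?thesis
      by (auto intro!: derivative_eq_intros simp: has_field_derivative_def mult.commute)
  qed
  from real_second_order_upper_bound[OF df df' bound] show ?thesis
    by simp
qed

lemma zero_row_sum_quadratic_form_le:
  fixes h :: "'i::finite \<Rightarrow> 'i \<Rightarrow> real" and v :: "'i \<Rightarrow> real"
  assumes row_sum: "\<And>i. (\<Sum>j\<in>UNIV. h i j) = 0"
    and off_diag: "\<And>i j. i \<noteq> j \<Longrightarrow> h i j \<le> 0"
    and v_bound: "\<And>i. \<bar>v i\<bar> \<le> m"
  shows "(\<Sum>i\<in>UNIV. v i * (\<Sum>j\<in>UNIV. h i j * v j)) \<le> 2 * m\<^sup>2 * (\<Sum>i\<in>UNIV. h i i)"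
proof -
  \<comment> \<open>Zero row sums allow subtracting v i within row i, which kills the diagonal term.\<close>
  have row: "v i * (\<Sum>j\<in>UNIV. h i j * v j) = (\<Sum>j\<in>UNIV. h i j * (v i * (v j - v i)))" for i
  proof -
    have "(\<Sum>j\<in>UNIV. h i j * (v i * (v j - v i)))
        = v i * (\<Sum>j\<in>UNIV. h i j * v j) - v i * v i * (\<Sum>j\<in>UNIV. h i j)"
      by (simp add: sum_distrib_left sum_subtractf algebra_simps)
    then show ?thesis
      using row_sum[of i] by simp
  qed
  have term_le: "h i j * (v i * (v j - v i)) \<le> - 2 * m\<^sup>2 * h i j + (if j = i then 2 * m\<^sup>2 * h i i else 0)"
    for i j
  proof (cases "j = i")
    case False
    have "\<bar>v i * (v j - v i)\<bar> \<le> m * (2 * m)"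
      unfolding abs_mult using v_bound[of i] v_bound[of j]
      by (intro mult_mono) (auto simp: abs_diff_le_iff)
    then have "- (2 * m\<^sup>2) \<le> v i * (v j - v i)"
      by (simp add: power2_eq_square abs_le_iff)
    from mult_left_mono_neg[OF this off_diag] False show ?thesis
      by (simp add: algebra_simps)
  qed simp
  have "(\<Sum>i\<in>UNIV. v i * (\<Sum>j\<in>UNIV. h i j * v j))
      \<le> (\<Sum>i\<in>UNIV. \<Sum>j\<in>UNIV. - 2 * m\<^sup>2 * h i j + (if j = i then 2 * m\<^sup>2 * h i i else 0))"
    unfolding row by (intro sum_mono term_le)
  also have "\<dots> = 2 * m\<^sup>2 * (\<Sum>i\<in>UNIV. h i i)"
    using row_sum by (simp add: sum_subtractf flip: sum_distrib_left)
  finally show ?thesis .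
qed

definition vec_max :: "real ^ 'n::finite \<Rightarrow> real" where
  "vec_max x = Max (range (\<lambda>j. x $ j))"

lemma component_le_vec_max: "x $ j \<le> vec_max x"
  unfolding vec_max_def by (rule Max_ge) auto

lemma vec_max_le_iff: "vec_max x \<le> c \<longleftrightarrow> (\<forall>j. x $ j \<le> c)"
  unfolding vec_max_def by (subst Max_le_iff) auto

lemma vec_max_attained: "\<exists>j. vec_max x = x $ j"
proof -
  have "vec_max x \<in> range (\<lambda>j. x $ j)"
    unfolding vec_max_def by (rule Max_in) auto
  then show ?thesis by auto
qed

lemma abs_vec_max_le: "\<bar>vec_max x\<bar> \<le> (\<Sum>j\<in>UNIV. \<bar>x $ j\<bar>)"
proof -
  obtain j where "vec_max x = x $ j"
    using vec_max_attained by blast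
  moreover have "\<bar>x $ j\<bar> \<le> (\<Sum>j\<in>UNIV. \<bar>x $ j\<bar>)"
    by (rule member_le_sum) auto
  ultimately show ?thesis by simp
qed

lemma vec_max_scaleR:
  assumes "0 \<le> c"
  shows "vec_max (c *\<^sub>R x) = c * vec_max x"
proof -
  have "c * Max (range (\<lambda>j. x $ j)) = Max ((*) c ` range (\<lambda>j. x $ j))"
    using assms by (intro mono_Max_commute) (auto simp: mono_def mult_left_mono)
  then show ?thesis
    by (simp add: vec_max_def image_image)
qed

lemma vec_max_add_const: "vec_max (x + c *\<^sub>R 1) = vec_max x + c"
proof -
  have "Max (range (\<lambda>j. x $ j)) + c = Max ((\<lambda>y. y + c) ` range (\<lambda>j. x $ j))"
    by (intro mono_Max_commute) (auto simp: mono_def)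
  then show ?thesis
    by (simp add: vec_max_def image_image)
qed

lemma mono_vec_max: "mono vec_max"
proof (rule monoI)
  fix x y :: "real ^ 'n"
  assume "x \<le> y"
  then have "x $ j \<le> vec_max y" for j
    using component_le_vec_max[of y j] by (metis less_eq_vec_def order_trans)
  then show "vec_max x \<le> vec_max y"
    by (simp add: vec_max_le_iff)
qed

lemma convex_on_vec_max: "convex_on UNIV vec_max"
proof (rule convex_onI)
  fix t :: real and x y :: "real ^ 'n"
  assume "0 < t" "t < 1"
  then have "(1 - t) * x $ j + t * y $ j \<le> (1 - t) * vec_max x + t * vec_max y" for j
    by (intro add_mono mult_left_mono component_le_vec_max) auto
  then show "vec_max ((1 - t) *\<^sub>R x + t *\<^sub>R y) \<le> (1 - t) * vec_max x + t * vec_max y"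
    by (simp add: vec_max_le_iff)
qed simp

lemma vec_max_sup_inf_le: "vec_max (sup x y) + vec_max (inf x y) \<le> vec_max x + vec_max y"
proof -
  have "sup x y $ j \<le> max (vec_max x) (vec_max y)" for j
    using max.mono[OF component_le_vec_max component_le_vec_max]
    by (simp add: sup_vec_def sup_real_def)
  then have "vec_max (sup x y) \<le> max (vec_max x) (vec_max y)"
    by (simp add: vec_max_le_iff)
  moreover have "vec_max (inf x y) \<le> min (vec_max x) (vec_max y)"
    by (auto simp: vec_max_le_iff inf_vec_def inf_real_def
        intro: min.coboundedI1 min.coboundedI2 component_le_vec_max)
  ultimately show ?thesis by linarith
qed

lemma inner_le_vec_max:
  assumes "y \<in> prob_simplex"
  shows "\<theta> \<bullet> y \<le> vec_max \<theta>"
proof -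
  have "\<theta> \<bullet> y = (\<Sum>i\<in>UNIV. \<theta> $ i * y $ i)"
    by (simp add: inner_vec_def)
  also have "\<dots> \<le> (\<Sum>i\<in>UNIV. vec_max \<theta> * y $ i)"
    using assms unfolding prob_simplex_def
    by (intro sum_mono mult_right_mono component_le_vec_max) auto
  also have "\<dots> = vec_max \<theta>"
    using assms by (simp add: prob_simplex_def flip: sum_distrib_left)
  finally show ?thesis .
qed

lemma one_eq_sum_axis: "(1 :: real ^ 'n::finite) = (\<Sum>j\<in>UNIV. axis j 1)"
  by (simp add: vec_eq_iff axis_def sum_component)

lemma axis_in_prob_simplex: "axis i 1 \<in> prob_simplex"
  by (auto simp: prob_simplex_def axis_def)

lemma cumul_0 [simp]: "cumul u 0 = 0"
  by (simp add: cumul_def)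

lemma cumul_Suc [simp]: "cumul u (Suc k) = cumul u k + u (Suc k)"
  by (simp add: cumul_def)

locale noise_law =
  fixes P :: "(real ^ 'n::finite) measure"
  assumes prob_space: "prob_space P"
    and integrable_component: "\<And>i. integrable P (\<lambda>e. e $ i)"
    and mean_zero: "\<And>i. (\<integral>e. e $ i \<partial>P) = 0"
begin

interpretation prob_space P
  by (rule prob_space)

lemma phi_eq_integral_vec_max: "phi P \<eta> \<theta> = (\<integral>e. vec_max (\<theta> + \<eta> *\<^sub>R e) \<partial>P)"
  by (simp add: phi_def vec_max_def)

lemma integrable_vec_max: "integrable P (\<lambda>e. vec_max (\<theta> + \<eta> *\<^sub>R e))"
proof (rule Bochner_Integration.integrable_bound)
  show "integrable P (\<lambda>e. \<Sum>j\<in>UNIV. \<bar>\<theta> $ j\<bar> + \<bar>\<eta>\<bar> * \<bar>e $ j\<bar>)"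
    using integrable_component by auto
  show "(\<lambda>e. vec_max (\<theta> + \<eta> *\<^sub>R e)) \<in> borel_measurable P"
    unfolding vec_max_def using integrable_component by (intro borel_measurable_Max) auto
  have "\<bar>vec_max (\<theta> + \<eta> *\<^sub>R e)\<bar> \<le> (\<Sum>j\<in>UNIV. \<bar>\<theta> $ j\<bar> + \<bar>\<eta>\<bar> * \<bar>e $ j\<bar>)" for e
    by (rule order_trans[OF abs_vec_max_le sum_mono]) (simp add: abs_triangle_ineq abs_mult[symmetric])
  then show "AE e in P. norm (vec_max (\<theta> + \<eta> *\<^sub>R e)) \<le> norm (\<Sum>j\<in>UNIV. \<bar>\<theta> $ j\<bar> + \<bar>\<eta>\<bar> * \<bar>e $ j\<bar>)"
    by (auto intro: order_trans abs_ge_self)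
qed

lemma component_le_phi: "\<theta> $ k \<le> phi P \<eta> \<theta>"
proof -
  have "(\<integral>e. \<theta> $ k + \<eta> * e $ k \<partial>P) = \<theta> $ k"
    using integrable_component mean_zero prob_space by simp
  moreover have "(\<integral>e. \<theta> $ k + \<eta> * e $ k \<partial>P) \<le> phi P \<eta> \<theta>"
    unfolding phi_eq_integral_vec_max using integrable_component integrable_vec_max
    by (intro integral_mono) (auto intro: order_trans[OF _ component_le_vec_max])
  ultimately show ?thesis by simp
qed

lemma vec_max_le_phi: "vec_max \<theta> \<le> phi P \<eta> \<theta>"
  by (simp add: vec_max_le_iff component_le_phi)

lemma convex_on_phi: "convex_on UNIV (phi P \<eta>)"
proof (rule convex_onI)
  fix t :: real and x y :: "real ^ 'n"
  assume t: "0 < t" "t < 1"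
  have "vec_max ((1 - t) *\<^sub>R x + t *\<^sub>R y + \<eta> *\<^sub>R e)
      \<le> (1 - t) * vec_max (x + \<eta> *\<^sub>R e) + t * vec_max (y + \<eta> *\<^sub>R e)" for e
    using convex_onD[OF convex_on_vec_max, of t "x + \<eta> *\<^sub>R e" "y + \<eta> *\<^sub>R e"] t
    by (simp add: algebra_simps)
  then have "phi P \<eta> ((1 - t) *\<^sub>R x + t *\<^sub>R y)
      \<le> (\<integral>e. (1 - t) * vec_max (x + \<eta> *\<^sub>R e) + t * vec_max (y + \<eta> *\<^sub>R e) \<partial>P)"
    unfolding phi_eq_integral_vec_max
    by (intro integral_mono integrable_vec_max Bochner_Integration.integrable_add integrable_mult_right)
  also have "\<dots> = (1 - t) * phi P \<eta> x + t * phi P \<eta> y"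
    unfolding phi_eq_integral_vec_max by (simp add: integrable_vec_max)
  finally show "phi P \<eta> ((1 - t) *\<^sub>R x + t *\<^sub>R y) \<le> (1 - t) * phi P \<eta> x + t * phi P \<eta> y" .
qed simp

lemma phi_add_const: "phi P \<eta> (\<theta> + c *\<^sub>R 1) = phi P \<eta> \<theta> + c"
proof -
  have "vec_max (\<theta> + c *\<^sub>R 1 + \<eta> *\<^sub>R e) = vec_max (\<theta> + \<eta> *\<^sub>R e) + c" for e
    using vec_max_add_const[of "\<theta> + \<eta> *\<^sub>R e" c] by (simp add: algebra_simps)
  then show ?thesis
    unfolding phi_eq_integral_vec_max using integrable_vec_max prob_space by simp
qed

lemma mono_phi: "mono (phi P \<eta>)"
proof (rule monoI)
  fix x y :: "real ^ 'n"
  assume "x \<le> y"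
  then have "vec_max (x + \<eta> *\<^sub>R e) \<le> vec_max (y + \<eta> *\<^sub>R e)" for e
    by (intro monoD[OF mono_vec_max] add_right_mono)
  then show "phi P \<eta> x \<le> phi P \<eta> y"
    unfolding phi_eq_integral_vec_max by (intro integral_mono integrable_vec_max)
qed

lemma phi_sup_inf_le: "phi P \<eta> (sup a b) + phi P \<eta> (inf a b) \<le> phi P \<eta> a + phi P \<eta> b"
proof -
  have "sup a b + \<eta> *\<^sub>R e = sup (a + \<eta> *\<^sub>R e) (b + \<eta> *\<^sub>R e)"
    and "inf a b + \<eta> *\<^sub>R e = inf (a + \<eta> *\<^sub>R e) (b + \<eta> *\<^sub>R e)" for e
    by (simp_all add: vec_eq_iff sup_vec_def inf_vec_def sup_real_def inf_real_def
        max_add_distrib_left min_add_distrib_left)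
  then have "vec_max (sup a b + \<eta> *\<^sub>R e) + vec_max (inf a b + \<eta> *\<^sub>R e)
      \<le> vec_max (a + \<eta> *\<^sub>R e) + vec_max (b + \<eta> *\<^sub>R e)" for e
    by (simp add: vec_max_sup_inf_le)
  then have "(\<integral>e. vec_max (sup a b + \<eta> *\<^sub>R e) + vec_max (inf a b + \<eta> *\<^sub>R e) \<partial>P)
      \<le> (\<integral>e. vec_max (a + \<eta> *\<^sub>R e) + vec_max (b + \<eta> *\<^sub>R e) \<partial>P)"
    by (intro integral_mono Bochner_Integration.integrable_add integrable_vec_max)
  then show ?thesis
    unfolding phi_eq_integral_vec_max by (simp add: integrable_vec_max)
qed

lemma phi_scale:
  assumes "0 < \<eta>"
  shows "phi P \<eta> \<theta> = \<eta> * phi P 1 ((1 / \<eta>) *\<^sub>R \<theta>)"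
proof -
  have "vec_max (\<theta> + \<eta> *\<^sub>R e) = \<eta> * vec_max ((1 / \<eta>) *\<^sub>R \<theta> + e)" for e
    using assms vec_max_scaleR[of \<eta> "(1 / \<eta>) *\<^sub>R \<theta> + e"] by (simp add: algebra_simps)
  then show ?thesis
    unfolding phi_eq_integral_vec_max by simp
qed

lemma inner_sub_phi_le_reg:
  assumes "y \<in> prob_simplex"
  shows "\<theta> \<bullet> y - phi P \<eta> \<theta> \<le> reg P \<eta> y"
proof -
  have "bdd_above (range (\<lambda>\<theta>. \<theta> \<bullet> y - phi P \<eta> \<theta>))"
    using order_trans[OF inner_le_vec_max[OF assms] vec_max_le_phi]
    by (intro bdd_aboveI2[of _ _ 0]) simp
  then show ?thesis
    unfolding reg_def by (rule cSUP_upper[OF UNIV_I])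
qed

end

locale smooth_surplus = noise_law P for P :: "(real ^ 'n::finite) measure" +
  fixes G :: "real ^ 'n \<Rightarrow> real ^ 'n" and H :: "real ^ 'n \<Rightarrow> real ^ 'n \<Rightarrow> real ^ 'n" and L :: real
  assumes gradient: "\<And>\<theta>. (phi P 1 has_derivative (\<lambda>h. G \<theta> \<bullet> h)) (at \<theta>)"
    and hessian: "\<And>\<theta>. (G has_derivative H \<theta>) (at \<theta>)"
    and trace_le: "\<And>\<theta>. 2 * (\<Sum>i\<in>UNIV. H \<theta> (axis i 1) $ i) \<le> L"
begin

lemma gradient_component_quotient:
  "((\<lambda>t. (phi P 1 (\<theta> + t *\<^sub>R axis i 1) - phi P 1 \<theta>) / t) \<longlongrightarrow> G \<theta> $ i) (at_right 0)"
  using has_derivative_directional_quotient[OF gradient, of \<theta> "axis i 1"] by (simp add: inner_axis)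

lemma gradient_nonneg: "0 \<le> G \<theta> $ i"
proof (rule tendsto_lowerbound[OF gradient_component_quotient])
  show "\<forall>\<^sub>F t in at_right 0. 0 \<le> (phi P 1 (\<theta> + t *\<^sub>R axis i 1) - phi P 1 \<theta>) / t"
    using eventually_at_right_0_less_1
  proof eventually_elim
    case (elim t)
    then have "\<theta> \<le> \<theta> + t *\<^sub>R axis i 1"
      by (simp add: less_eq_vec_def axis_def)
    with elim show ?case
      using monoD[OF mono_phi] by simp
  qed
qed simp

lemma gradient_inner_1: "G \<theta> \<bullet> 1 = 1"
proof (rule tendsto_unique)
  show "((\<lambda>t. (phi P 1 (\<theta> + t *\<^sub>R 1) - phi P 1 \<theta>) / t) \<longlongrightarrow> G \<theta> \<bullet> 1) (at_right 0)"
    by (rule has_derivative_directional_quotient[OF gradient])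
  show "((\<lambda>t. (phi P 1 (\<theta> + t *\<^sub>R 1) - phi P 1 \<theta>) / t) \<longlongrightarrow> 1) (at_right 0)"
    by (rule Lim_transform_eventually[OF tendsto_const])
      (use eventually_at_right_0_less_1 in eventually_elim, auto simp: phi_add_const)
qed simp

lemma gradient_in_prob_simplex: "G \<theta> \<in> prob_simplex"
  using gradient_nonneg gradient_inner_1[of \<theta>] by (simp add: prob_simplex_def inner_vec_def)

lemma gradient_add_const: "G (\<theta> + c *\<^sub>R 1) = G \<theta>"
proof -
  have shift: "((\<lambda>x. x + c *\<^sub>R 1) has_derivative (\<lambda>h. h)) (at \<theta>)"
    by (auto intro!: derivative_eq_intros)
  have "((\<lambda>x. phi P 1 (x + c *\<^sub>R 1)) has_derivative (\<lambda>h. G (\<theta> + c *\<^sub>R 1) \<bullet> h)) (at \<theta>)"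
    using has_derivative_compose[OF shift gradient] by (simp add: o_def)
  moreover have "((\<lambda>x. phi P 1 (x + c *\<^sub>R 1)) has_derivative (\<lambda>h. G \<theta> \<bullet> h)) (at \<theta>)"
    unfolding phi_add_const by (auto intro!: derivative_eq_intros gradient)
  ultimately have "(\<lambda>h. G (\<theta> + c *\<^sub>R 1) \<bullet> h) = (\<lambda>h. G \<theta> \<bullet> h)"
    by (rule has_derivative_unique)
  then have "G (\<theta> + c *\<^sub>R 1) \<bullet> axis i 1 = G \<theta> \<bullet> axis i 1" for i
    by metis
  then show ?thesis
    by (simp add: vec_eq_iff inner_axis)
qed

lemma hessian_1: "H \<theta> 1 = 0"
proof -
  have line: "((\<lambda>t. \<theta> + t *\<^sub>R 1) has_derivative (\<lambda>t. t *\<^sub>R 1)) (at (0::real))"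
    by (auto intro!: derivative_eq_intros)
  have "((\<lambda>t. G (\<theta> + t *\<^sub>R 1)) has_derivative (\<lambda>t. H \<theta> (t *\<^sub>R 1))) (at 0)"
    using has_derivative_compose[OF line, of G "H \<theta>"] hessian by (simp add: o_def)
  moreover have "((\<lambda>t. G (\<theta> + t *\<^sub>R 1)) has_derivative (\<lambda>t. 0)) (at 0)"
    by (simp add: gradient_add_const)
  ultimately have "(\<lambda>t. H \<theta> (t *\<^sub>R 1)) = (\<lambda>t. 0)"
    by (rule has_derivative_unique)
  then show ?thesis
    by (metis scaleR_one)
qed

lemma hessian_row_sum: "(\<Sum>j\<in>UNIV. H \<theta> (axis j 1) $ i) = 0"
proof -
  have "bounded_linear (H \<theta>)"
    using hessian by (rule has_derivative_bounded_linear)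
  then have "H \<theta> 1 = (\<Sum>j\<in>UNIV. H \<theta> (axis j 1))"
    by (simp add: linear_sum bounded_linear.linear one_eq_sum_axis)
  then show ?thesis
    using hessian_1 by (simp flip: sum_component)
qed

lemma gradient_decreasing:
  assumes "0 \<le> s" "i \<noteq> k"
  shows "G (\<theta> + s *\<^sub>R axis k 1) $ i \<le> G \<theta> $ i"
proof (rule tendsto_le[OF _ gradient_component_quotient gradient_component_quotient])
  show "\<forall>\<^sub>F t in at_right 0.
      (phi P 1 (\<theta> + s *\<^sub>R axis k 1 + t *\<^sub>R axis i 1) - phi P 1 (\<theta> + s *\<^sub>R axis k 1)) / t
      \<le> (phi P 1 (\<theta> + t *\<^sub>R axis i 1) - phi P 1 \<theta>) / t"
    using eventually_at_right_0_less_1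
  proof eventually_elim
    case (elim t)
    have "sup (\<theta> + t *\<^sub>R axis i 1) (\<theta> + s *\<^sub>R axis k 1) = \<theta> + s *\<^sub>R axis k 1 + t *\<^sub>R axis i 1"
      and "inf (\<theta> + t *\<^sub>R axis i 1) (\<theta> + s *\<^sub>R axis k 1) = \<theta>"
      using assms elim by (auto simp: vec_eq_iff sup_vec_def inf_vec_def axis_def sup_real_def inf_real_def)
    then have "phi P 1 (\<theta> + s *\<^sub>R axis k 1 + t *\<^sub>R axis i 1) + phi P 1 \<theta>
        \<le> phi P 1 (\<theta> + t *\<^sub>R axis i 1) + phi P 1 (\<theta> + s *\<^sub>R axis k 1)"
      using phi_sup_inf_le[of 1 "\<theta> + t *\<^sub>R axis i 1" "\<theta> + s *\<^sub>R axis k 1"] by simp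
    with elim show ?case
      by (intro divide_right_mono) auto
  qed
qed simp

lemma hessian_off_diagonal_nonpos:
  assumes "i \<noteq> k"
  shows "H \<theta> (axis k 1) $ i \<le> 0"
proof -
  have "((\<lambda>x. G x $ i) has_derivative (\<lambda>h. H \<theta> h $ i)) (at \<theta>)"
    by (rule bounded_linear.has_derivative[OF bounded_linear_vec_nth hessian])
  then show ?thesis
  proof (rule tendsto_upperbound[OF has_derivative_directional_quotient])
    show "\<forall>\<^sub>F t in at_right 0. (G (\<theta> + t *\<^sub>R axis k 1) $ i - G \<theta> $ i) / t \<le> 0"
      using eventually_at_right_0_less_1
      by eventually_elim (use gradient_decreasing[OF _ assms] in \<open>auto intro: divide_nonpos_pos\<close>)
  qed simp
qed

lemma hessian_quadratic_form_le:
  assumes "\<And>i. \<bar>v $ i\<bar> \<le> m"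
  shows "H \<theta> v \<bullet> v \<le> L * m\<^sup>2"
proof -
  have "linear (H \<theta>)"
    using has_derivative_bounded_linear[OF hessian] by (rule bounded_linear.linear)
  moreover have "v = (\<Sum>j\<in>UNIV. v $ j *\<^sub>R axis j 1)"
    using basis_expansion[of v] by (simp add: scalar_mult_eq_scaleR)
  ultimately have "H \<theta> v = (\<Sum>j\<in>UNIV. v $ j *\<^sub>R H \<theta> (axis j 1))"
    by (metis (no_types, lifting) linear_cmul linear_sum sum.cong)
  then have "H \<theta> v \<bullet> v = (\<Sum>i\<in>UNIV. v $ i * (\<Sum>j\<in>UNIV. H \<theta> (axis j 1) $ i * v $ j))"
    by (simp add: inner_vec_def sum_component mult.commute)
  also have "\<dots> \<le> 2 * m\<^sup>2 * (\<Sum>i\<in>UNIV. H \<theta> (axis i 1) $ i)"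
    by (rule zero_row_sum_quadratic_form_le) (auto simp: hessian_row_sum hessian_off_diagonal_nonpos assms)
  also have "\<dots> \<le> L * m\<^sup>2"
    using mult_right_mono[OF trace_le[of \<theta>], of "m\<^sup>2"] by (simp add: algebra_simps)
  finally show ?thesis .
qed

lemma phi_has_derivative:
  assumes "0 < \<eta>"
  shows "(phi P \<eta> has_derivative (\<lambda>h. G ((1 / \<eta>) *\<^sub>R \<theta>) \<bullet> h)) (at \<theta>)"
proof -
  have scale: "((\<lambda>\<theta>. (1 / \<eta>) *\<^sub>R \<theta>) has_derivative (\<lambda>h. (1 / \<eta>) *\<^sub>R h)) (at \<theta>)"
    by (auto intro!: derivative_eq_intros)
  have "((\<lambda>\<theta>. phi P 1 ((1 / \<eta>) *\<^sub>R \<theta>)) has_derivative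
      (\<lambda>h. G ((1 / \<eta>) *\<^sub>R \<theta>) \<bullet> ((1 / \<eta>) *\<^sub>R h))) (at \<theta>)"
    using has_derivative_compose[OF scale gradient] by (simp add: o_def)
  then have "((\<lambda>\<theta>. \<eta> * phi P 1 ((1 / \<eta>) *\<^sub>R \<theta>)) has_derivative
      (\<lambda>h. \<eta> * (G ((1 / \<eta>) *\<^sub>R \<theta>) \<bullet> ((1 / \<eta>) *\<^sub>R h)))) (at \<theta>)"
    by (rule has_derivative_mult_right)
  moreover have "phi P \<eta> = (\<lambda>\<theta>. \<eta> * phi P 1 ((1 / \<eta>) *\<^sub>R \<theta>))"
    using phi_scale[OF assms] by blast
  ultimately show ?thesis
    using assms by simp
qed

lemma phi_second_order_bound:
  assumes \<eta>: "0 < \<eta>" and u: "\<And>i. \<bar>u $ i\<bar> \<le> m"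
  shows "phi P \<eta> (\<theta> + u) \<le> phi P \<eta> \<theta> + G ((1 / \<eta>) *\<^sub>R \<theta>) \<bullet> u + L * m\<^sup>2 / (2 * \<eta>)"
proof -
  have "\<bar>((1 / \<eta>) *\<^sub>R u) $ i\<bar> \<le> m / \<eta>" for i
    using u[of i] \<eta> by (simp add: divide_right_mono)
  then have "phi P 1 ((1 / \<eta>) *\<^sub>R \<theta> + (1 / \<eta>) *\<^sub>R u)
      \<le> phi P 1 ((1 / \<eta>) *\<^sub>R \<theta>) + G ((1 / \<eta>) *\<^sub>R \<theta>) \<bullet> ((1 / \<eta>) *\<^sub>R u) + L * (m / \<eta>)\<^sup>2 / 2"
    by (intro second_order_upper_bound[OF gradient hessian] hessian_quadratic_form_le)
  then have "\<eta> * phi P 1 ((1 / \<eta>) *\<^sub>R \<theta> + (1 / \<eta>) *\<^sub>R u)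
      \<le> \<eta> * (phi P 1 ((1 / \<eta>) *\<^sub>R \<theta>) + G ((1 / \<eta>) *\<^sub>R \<theta>) \<bullet> ((1 / \<eta>) *\<^sub>R u) + L * (m / \<eta>)\<^sup>2 / 2)"
    using \<eta> by (simp add: mult_left_mono)
  also have "\<dots> = \<eta> * phi P 1 ((1 / \<eta>) *\<^sub>R \<theta>) + G ((1 / \<eta>) *\<^sub>R \<theta>) \<bullet> u + L * m\<^sup>2 / (2 * \<eta>)"
    using \<eta> by (simp add: field_simps power2_eq_square)
  finally show ?thesis
    by (simp add: phi_scale[OF \<eta>] scaleR_add_right)
qed

lemma ftrl_iterate_eq_gradient:
  assumes \<eta>: "0 < \<eta>" and x: "x \<in> prob_simplex"
    and opt: "\<And>y. y \<in> prob_simplex \<Longrightarrow> \<theta> \<bullet> y - reg P \<eta> y \<le> \<theta> \<bullet> x - reg P \<eta> x"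
  shows "x = G ((1 / \<eta>) *\<^sub>R \<theta>)"
proof (rule subgradient_eq_gradient[OF phi_has_derivative[OF \<eta>]])
  define g where "g = G ((1 / \<eta>) *\<^sub>R \<theta>)"
  \<comment> \<open>Fenchel-Young equality: the supremum defining reg P eta g is attained at theta.\<close>
  have "reg P \<eta> g \<le> \<theta> \<bullet> g - phi P \<eta> \<theta>"
    unfolding reg_def
  proof (rule cSUP_least)
    fix \<theta>' :: "real ^ 'n"
    have "g \<bullet> (\<theta>' - \<theta>) = \<theta>' \<bullet> g - \<theta> \<bullet> g"
      by (simp add: inner_diff_right inner_commute)
    then show "\<theta>' \<bullet> g - phi P \<eta> \<theta>' \<le> \<theta> \<bullet> g - phi P \<eta> \<theta>"
      using convex_on_has_derivative_le[OF convex_on_phi phi_has_derivative[OF \<eta>], of \<theta> \<theta>']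
      by (simp add: g_def)
  qed simp
  then have "reg P \<eta> x \<le> \<theta> \<bullet> x - phi P \<eta> \<theta>"
    using opt[of g] gradient_in_prob_simplex by (simp add: g_def)
  then show "phi P \<eta> \<theta> + x \<bullet> (\<theta>' - \<theta>) \<le> phi P \<eta> \<theta>'" for \<theta>'
    using inner_sub_phi_le_reg[OF x, of \<theta>' \<eta>] by (simp add: inner_diff_right inner_commute)
qed

lemma ftrl_payoff_ge:
  assumes \<eta>: "0 < \<eta>" and ftrl: "is_ftrl P \<eta> u T x"
    and u: "\<And>t i. t \<in> {1..T} \<Longrightarrow> \<bar>u t $ i\<bar> \<le> m"
    and "k \<le> T"
  shows "phi P \<eta> (cumul u k) - phi P \<eta> 0 - k * (L * m\<^sup>2 / (2 * \<eta>)) \<le> (\<Sum>t\<in>{1..k}. u t \<bullet> x t)"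
  using \<open>k \<le> T\<close>
proof (induction k)
  case (Suc k)
  then have "x (Suc k) = G ((1 / \<eta>) *\<^sub>R cumul u k)"
    using ftrl unfolding is_ftrl_def by (intro ftrl_iterate_eq_gradient[OF \<eta>]) auto
  moreover have "phi P \<eta> (cumul u k + u (Suc k))
      \<le> phi P \<eta> (cumul u k) + G ((1 / \<eta>) *\<^sub>R cumul u k) \<bullet> u (Suc k) + L * m\<^sup>2 / (2 * \<eta>)"
    using Suc.prems by (intro phi_second_order_bound[OF \<eta>] u) auto
  ultimately show ?case
    using Suc by (simp add: inner_commute algebra_simps add_divide_distrib)
qed simp

lemma ftrl_regret_le:
  assumes \<eta>: "0 < \<eta>" and ftrl: "is_ftrl P \<eta> u T x"
    and u: "\<And>t i. t \<in> {1..T} \<Longrightarrow> \<bar>u t $ i\<bar> \<le> m"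
  shows "regret u T x \<le> \<eta> * phi P 1 0 + L / (2 * \<eta>) * T * m\<^sup>2"
proof -
  have "(SUP y\<in>prob_simplex. cumul u T \<bullet> y) \<le> phi P \<eta> (cumul u T)"
    using axis_in_prob_simplex order_trans[OF inner_le_vec_max vec_max_le_phi]
    by (intro cSUP_least) blast+
  moreover have "phi P \<eta> 0 = \<eta> * phi P 1 0"
    by (simp add: phi_scale[OF \<eta>])
  ultimately show ?thesis
    using ftrl_payoff_ge[OF \<eta> ftrl u order_refl] unfolding regret_def
    by (simp add: field_simps)
qed

end

lemma regret_zero_payoffs:
  assumes "\<And>t. t \<in> {1..T} \<Longrightarrow> u t = 0"
  shows "regret u T x = 0"
proof -
  have "prob_simplex \<noteq> ({} :: (real ^ 'n::finite) set)"
    using axis_in_prob_simplex by blast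
  then have "(SUP y\<in>prob_simplex. (0 :: real)) = 0"
    by (rule cSUP_const)
  then show ?thesis
    using assms by (simp add: regret_def cumul_def)
qed

lemma tuned_step_size_bound:
  fixes a L T m :: real
  assumes a: "0 < a" and L: "0 < L" and T: "0 < T" and m: "0 < m"
  shows "sqrt (L * T * m\<^sup>2 / (2 * a)) * a + L / (2 * sqrt (L * T * m\<^sup>2 / (2 * a))) * T * m\<^sup>2
    = m * sqrt (2 * a * L * T)"
proof -
  define s where "s = sqrt (2 * a * L * T)"
  have s: "0 < s" "s\<^sup>2 = 2 * a * L * T"
    unfolding s_def using a L T by simp_all
  have "(m * s / (2 * a))\<^sup>2 = m\<^sup>2 * s\<^sup>2 / (2 * a)\<^sup>2"
    by (simp add: power_mult_distrib power_divide)
  also have "\<dots> = L * T * m\<^sup>2 / (2 * a)"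
    unfolding s(2) using a by (simp add: field_simps power2_eq_square)
  finally have "(m * s / (2 * a))\<^sup>2 = L * T * m\<^sup>2 / (2 * a)" .
  then have eta: "sqrt (L * T * m\<^sup>2 / (2 * a)) = m * s / (2 * a)"
    using a m s by (intro real_sqrt_unique) auto
  have "m * s / (2 * a) * a + L / (2 * (m * s / (2 * a))) * T * m\<^sup>2 = m * s / 2 + L * T * m * a / s"
    using a m s by (simp add: field_simps power2_eq_square)
  also have "L * T * m * a / s = m * s / 2"
    using s by (simp add: field_simps power2_eq_square)
  finally show ?thesis
    unfolding eta s_def[symmetric] by simp
qed

theorem corollary2:
  fixes P :: "(real ^ 'n::finite) measure"
    and L umax :: real and T :: nat and u :: "nat \<Rightarrow> real ^ 'n"
  assumes N2: "CARD('n) \<ge> 2"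
    and prob: "prob_space P" and sets_P: "sets P = sets borel"
    and integ: "\<forall>i. integrable P (\<lambda>e. e $ i)"
    and mean0: "\<forall>i. (\<integral>e. e $ i \<partial>P) = 0"
    and abscont: "absolutely_continuous lborel P"
    and fullsupp: "\<forall>U. open U \<longrightarrow> U \<noteq> {} \<longrightarrow> emeasure P U > 0"
    and L_pos: "L > 0"
    and C2: "\<exists>G H. (\<forall>\<theta>. (phi P 1 has_derivative (\<lambda>h. G \<theta> \<bullet> h)) (at \<theta>))
               \<and> (\<forall>\<theta>. (G has_derivative H \<theta>) (at \<theta>))
               \<and> (\<forall>i j. continuous_on UNIV (\<lambda>\<theta>. H \<theta> (axis j 1) $ i))
               \<and> (\<forall>\<theta>. 2 * (\<Sum>i\<in>UNIV. H \<theta> (axis i 1) $ i) \<le> L)"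
    and T1: "T \<ge> 1"
    and ubound: "\<forall>t\<in>{1..T}. \<forall>i. \<bar>u t $ i\<bar> \<le> umax"
  shows "(\<forall>\<eta>>0. \<forall>x. is_ftrl P \<eta> u T x \<longrightarrow>
            regret u T x \<le> \<eta> * phi P 1 0 + L / (2 * \<eta>) * T * umax\<^sup>2)
       \<and> (phi P 1 0 > 0 \<longrightarrow>
            (\<forall>x. is_ftrl P (sqrt (L * T * umax\<^sup>2 / (2 * phi P 1 0))) u T x \<longrightarrow>
               regret u T x \<le> umax * sqrt (2 * phi P 1 0 * L * T)))"
proof -
  obtain G H where
    gradient: "\<And>\<theta>. (phi P 1 has_derivative (\<lambda>h. G \<theta> \<bullet> h)) (at \<theta>)" and
    hessian: "\<And>\<theta>. (G has_derivative H \<theta>) (at \<theta>)" and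
    trace: "\<And>\<theta>. 2 * (\<Sum>i\<in>UNIV. H \<theta> (axis i 1) $ i) \<le> L"
    using C2 by blast
  interpret smooth_surplus P G H L
    by (rule smooth_surplus.intro[OF noise_law.intro smooth_surplus_axioms.intro])
      (simp_all add: prob integ mean0 gradient hessian trace)
  have u: "\<And>t i. t \<in> {1..T} \<Longrightarrow> \<bar>u t $ i\<bar> \<le> umax"
    using ubound by blast
  have "0 \<le> umax"
    using u[of 1] T1 by force
  show ?thesis
  proof (intro conjI allI impI)
    fix \<eta> :: real and x
    assume "0 < \<eta>" "is_ftrl P \<eta> u T x"
    then show "regret u T x \<le> \<eta> * phi P 1 0 + L / (2 * \<eta>) * T * umax\<^sup>2"
      by (rule ftrl_regret_le[OF _ _ u])
  next
    fix x
    assume pos: "0 < phi P 1 0" and ftrl: "is_ftrl P (sqrt (L * T * umax\<^sup>2 / (2 * phi P 1 0))) u T x"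
    show "regret u T x \<le> umax * sqrt (2 * phi P 1 0 * L * T)"
    proof (cases "umax = 0")
      case True
      then have "regret u T x = 0"
        using u by (intro regret_zero_payoffs) (simp add: vec_eq_iff)
      with True show ?thesis
        by simp
    next
      case False
      with \<open>0 \<le> umax\<close> have "0 < umax"
        by simp
      then show ?thesis
        using ftrl_regret_le[OF _ ftrl u] tuned_step_size_bound[of "phi P 1 0" L T umax] pos L_pos T1
        by simp
    qed
  qed
qed

end
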